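(* Let $\mathcal{F}$ be an argumentation framework and $S\subseteq A_{\mathcal{F}}$. If $\beta$ is an ordinal with $\beta>\alpha_S(a)$ for every $a\in A_{\mathcal{F}}$, then $\Delta_{\mathcal{F},S}=\Delta^\beta_{\mathcal{F},S}$.
   Context: An argumentation framework is $\mathcal{F}=(A_{\mathcal{F}},R_{\mathcal{F}})$ with $R_{\mathcal{F}}\subseteq A_{\mathcal{F}}\times A_{\mathcal{F}}$; $a\rightarrow b$ means $(a,b)\in R_{\mathcal{F}}$. $\mathcal{F}|_B=(A_{\mathcal{F}}\cap B,R_{\mathcal{F}}\cap(B\times B))$. $\mathrm{SCC}(a)$ is the set of $b$ with directed attack paths (possibly of length 0) from $a$ to $b$ and back. $D_S(X)=\{b\in X:\exists a\in S\setminus X,\ a\rightarrow b\}$. $C^0_S(a)=\mathrm{SCC}(a)$; $C^{\alpha+1}_S(a)$ = the strongly connected component of $a$ in $\mathcal{F}|_{C^\alpha_S(a)\setminus D_S(C^\alpha_S(a))}$ (empty if $a$ is not in that set); for limit $\lambda$, $C^\lambda_S(a)$ = the component of $a$ in $\mathcal{F}|_{\bigcap_{\alpha<\lambda}C^\alpha_S(a)}$. $\alpha_S(a)$ is the least ordinal $\alpha$ such that $a\notin C^\alpha_S(a)$ or $C^{\alpha+1}_S(a)=C^\alpha_S(a)$. $a\Rightarrow^B_{\mathcal{F}}b$ means there is a directed attack path from $a$ to $b$ in $\mathcal{F}|_B$. For $D\subseteq A_{\mathcal{F}}$, $\Delta_{\mathcal{F},S}(D)=\{a\in A_{\mathcal{F}}:\exists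 b\in S\,(b\rightarrow a\text{ and not }a\Rightarrow^{A_{\mathcal{F}}\setminus D}_{\mathcal{F}}b)\}$; this operator on subsets of $A_{\mathcal{F}}$ is monotone and $\Delta_{\mathcal{F},S}$ (as a set) denotes its least fixed point. Iterates: $\Delta^0_{\mathcal{F},S}=\emptyset$, $\Delta^{\alpha+1}_{\mathcal{F},S}=\Delta_{\mathcal{F},S}(\Delta^\alpha_{\mathcal{F},S})$, $\Delta^\lambda_{\mathcal{F},S}=\bigcup_{\alpha<\lambda}\Delta^\alpha_{\mathcal{F},S}$ for limit $\lambda$. *)

theory Defs
  imports Main
begin

text \<open>Ordinals are represented as elements of a type of class wellorder; every
ordinal below the order type of the index type is such an element.\<close>

definition is_zero_ord :: "'o::wellorder \<Rightarrow> bool" where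
  "is_zero_ord x \<longleftrightarrow> (\<forall>y. x \<le> y)"

definition is_succ_ord :: "'o::wellorder \<Rightarrow> bool" where
  "is_succ_ord x \<longleftrightarrow> (\<exists>y. y < x \<and> (\<forall>w. w < x \<longrightarrow> w \<le> y))"

definition pred_ord :: "'o::wellorder \<Rightarrow> 'o" where
  "pred_ord x = (THE y. y < x \<and> (\<forall>w. w < x \<longrightarrow> w \<le> y))"

definition ord_rec :: "'b \<Rightarrow> ('b \<Rightarrow> 'b) \<Rightarrow> (('o \<Rightarrow> 'b) \<Rightarrow> 'o \<Rightarrow> 'b) \<Rightarrow> 'o::wellorder \<Rightarrow> 'b" where
  "ord_rec z s l = wfrec {(y, x). y < x}
     (\<lambda>f x. if is_zero_ord x then z
            else if is_succ_ord x then s (f (pred_ord x))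
            else l f x)"

definition reach :: "'a set \<Rightarrow> ('a \<times> 'a) set \<Rightarrow> 'a set \<Rightarrow> 'a \<Rightarrow> 'a \<Rightarrow> bool" where
  "reach A R B a b \<longleftrightarrow> a \<in> A \<inter> B \<and> (a, b) \<in> (R \<inter> (B \<times> B))\<^sup>*"

text \<open>Strongly connected component of a in F restricted to B (empty if a not in A \<inter> B).\<close>
definition scc_in :: "'a set \<Rightarrow> ('a \<times> 'a) set \<Rightarrow> 'a set \<Rightarrow> 'a \<Rightarrow> 'a set" where
  "scc_in A R B a = {b. reach A R B a b \<and> reach A R B b a}"

definition D_S :: "('a \<times> 'a) set \<Rightarrow> 'a set \<Rightarrow> 'a set \<Rightarrow> 'a set" where
  "D_S R S X = {b \<in> X. \<exists>c \<in> S - X. (c, b) \<in> R}"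

definition C_S :: "'a set \<Rightarrow> ('a \<times> 'a) set \<Rightarrow> 'a set \<Rightarrow> 'a \<Rightarrow> 'o::wellorder \<Rightarrow> 'a set" where
  "C_S A R S a = ord_rec (scc_in A R A a)
      (\<lambda>X. scc_in A R (X - D_S R S X) a)
      (\<lambda>f x. scc_in A R (\<Inter>{f y | y. y < x}) a)"

text \<open>Stopping condition: a \<notin> C^g or C^(g+1) = C^g (C^(g+1) written out by its definition).\<close>
definition alpha_stop :: "'a set \<Rightarrow> ('a \<times> 'a) set \<Rightarrow> 'a set \<Rightarrow> 'a \<Rightarrow> 'o::wellorder \<Rightarrow> bool" where
  "alpha_stop A R S a g \<longleftrightarrow>
     (let X = C_S A R S a g in a \<notin> X \<or> scc_in A R (X - D_S R S X) a = X)"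

definition alpha_S :: "'a set \<Rightarrow> ('a \<times> 'a) set \<Rightarrow> 'a set \<Rightarrow> 'a \<Rightarrow> 'o::wellorder" where
  "alpha_S A R S a = (LEAST g. alpha_stop A R S a g)"

definition DeltaOp :: "'a set \<Rightarrow> ('a \<times> 'a) set \<Rightarrow> 'a set \<Rightarrow> 'a set \<Rightarrow> 'a set" where
  "DeltaOp A R S D = {a \<in> A. \<exists>b \<in> S. (b, a) \<in> R \<and> \<not> reach A R (A - D) a b}"

definition Delta_lfp :: "'a set \<Rightarrow> ('a \<times> 'a) set \<Rightarrow> 'a set \<Rightarrow> 'a set" where
  "Delta_lfp A R S = lfp (DeltaOp A R S)"

definition Delta_iter :: "'a set \<Rightarrow> ('a \<times> 'a) set \<Rightarrow> 'a set \<Rightarrow> 'o::wellorder \<Rightarrow> 'a set" where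
  "Delta_iter A R S = ord_rec {} (DeltaOp A R S) (\<lambda>f x. \<Union>{f y | y. y < x})"

end

theory Submission
  imports Defs
begin

text \<open>As long as a has not entered \<open>\<Delta>\<^sup>\<gamma>\<close>, the component \<open>C\<^sup>\<gamma>\<^sub>S(a)\<close> is the strongly
connected component of a in F restricted to \<open>A - \<Delta>\<^sup>\<gamma>\<close>: inside such a component, \<open>D\<^sub>S\<close>
picks out exactly the arguments added by the next application of the operator. Now let
a lie outside \<open>\<Delta>\<^sup>\<beta>\<close>, hence outside \<open>\<Delta>\<^sup>\<gamma>\<close> for \<open>\<gamma> = \<alpha>\<^sub>S(a) < \<beta>\<close>. The stopping condition
says that the component X of a at \<open>\<gamma>\<close> has \<open>D\<^sub>S(X) = \<emptyset>\<close> and is strongly connected by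
itself, so every attacker from S of a member of X is reachable back inside X. Then the
complement of X is closed under the operator, and a is not in the least fixed point.
The converse inclusion holds for the iterates of any monotone operator.\<close>

lemma is_succ_ord_not_zero: "is_succ_ord x \<Longrightarrow> \<not> is_zero_ord x"
  unfolding is_succ_ord_def is_zero_ord_def by (meson not_le)

lemma
  assumes "is_succ_ord (x::'o::wellorder)"
  shows pred_ord_less: "pred_ord x < x"
    and le_pred_ord: "y < x \<Longrightarrow> y \<le> pred_ord x"
proof -
  obtain p where p: "p < x" "\<forall>w. w < x \<longrightarrow> w \<le> p"
    using assms unfolding is_succ_ord_def by blast
  then have "pred_ord x = p"
    unfolding pred_ord_def by (blast intro: the_equality order.antisym)
  then show "pred_ord x < x" "y < x \<Longrightarrow> y \<le> pred_ord x"
    using p by auto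
qed

lemma ord_induct [case_names zero succ limit]:
  fixes x :: "'o::wellorder"
  assumes "\<And>x. is_zero_ord x \<Longrightarrow> P x"
    and "\<And>x. is_succ_ord x \<Longrightarrow> P (pred_ord x) \<Longrightarrow> P x"
    and "\<And>x. \<not> is_zero_ord x \<Longrightarrow> \<not> is_succ_ord x \<Longrightarrow>
      (\<And>y. y < x \<Longrightarrow> P y) \<Longrightarrow> P x"
  shows "P x"
proof (induction x rule: less_induct)
  case (less x)
  then show ?case
    using assms pred_ord_less by blast
qed

lemma ord_rec_unfold:
  "ord_rec z s l x = (if is_zero_ord x then z
     else if is_succ_ord x then s (cut (ord_rec z s l) {(y, x). y < x} x (pred_ord x))
     else l (cut (ord_rec z s l) {(y, x). y < x} x) x)"
  unfolding ord_rec_def by (subst wfrec[OF wf]) simp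

lemma ord_rec_zero: "is_zero_ord x \<Longrightarrow> ord_rec z s l x = z"
  by (subst ord_rec_unfold) simp

lemma ord_rec_succ: "is_succ_ord x \<Longrightarrow> ord_rec z s l x = s (ord_rec z s l (pred_ord x))"
  by (subst ord_rec_unfold) (simp add: is_succ_ord_not_zero cut_apply pred_ord_less)

lemma ord_rec_limit:
  fixes x :: "'o::wellorder"
  assumes "\<not> is_zero_ord x" "\<not> is_succ_ord x"
  shows "ord_rec z s (\<lambda>f x. L {f y | y. y < x}) x =
    L {ord_rec z s (\<lambda>f x. L {f y | y. y < x}) y | y. y < x}"
proof -
  have cut_image: "{cut g {(y, x). y < x} x y | y. y < x} = {g y | y. y < x}" for g :: "'o \<Rightarrow> 'b"
    by (metis (lifting) case_prodI cut_apply mem_Collect_eq)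
  show ?thesis
    by (subst ord_rec_unfold) (simp only: assms if_False cut_image)
qed

definition ord_iter :: "('a set \<Rightarrow> 'a set) \<Rightarrow> 'o::wellorder \<Rightarrow> 'a set" where
  "ord_iter F = ord_rec {} F (\<lambda>f x. \<Union>{f y | y. y < x})"

lemma ord_iter_zero: "is_zero_ord x \<Longrightarrow> ord_iter F x = {}"
  unfolding ord_iter_def by (rule ord_rec_zero)

lemma ord_iter_succ: "is_succ_ord x \<Longrightarrow> ord_iter F x = F (ord_iter F (pred_ord x))"
  unfolding ord_iter_def by (rule ord_rec_succ)

lemma ord_iter_limit:
  "\<not> is_zero_ord x \<Longrightarrow> \<not> is_succ_ord x \<Longrightarrow> ord_iter F x = \<Union>{ord_iter F y | y. y < x}"
  unfolding ord_iter_def by (rule ord_rec_limit)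

lemma ord_iter_subset_invariant:
  assumes "\<And>D. D \<subseteq> B \<Longrightarrow> F D \<subseteq> B"
  shows "ord_iter F x \<subseteq> B"
  by (induction x rule: ord_induct) (auto simp: ord_iter_zero ord_iter_succ ord_iter_limit assms)

lemma ord_iter_subset_lfp: "mono F \<Longrightarrow> ord_iter F x \<subseteq> lfp F"
  by (rule ord_iter_subset_invariant) (metis lfp_fixpoint monoD)

lemma ord_iter_inflationary:
  assumes "mono F"
  shows "ord_iter F x \<subseteq> F (ord_iter F x)"
proof (induction x rule: ord_induct)
  case (zero x)
  then show ?case by (simp add: ord_iter_zero)
next
  case (succ x)
  then show ?case by (simp add: ord_iter_succ monoD[OF assms])
next
  case (limit x)
  have "ord_iter F y \<subseteq> F (ord_iter F x)" if "y < x" for y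
  proof -
    have "ord_iter F y \<subseteq> ord_iter F x"
      using limit.hyps that by (auto simp: ord_iter_limit)
    then show ?thesis
      using limit.IH[OF that] monoD[OF assms] by blast
  qed
  then show ?case
    using limit.hyps by (auto simp: ord_iter_limit[of x])
qed

lemma ord_iter_mono:
  assumes "mono F" and "x \<le> y"
  shows "ord_iter F x \<subseteq> ord_iter F y"
  using assms(2)
proof (induction y rule: ord_induct)
  case (zero y)
  then show ?case unfolding is_zero_ord_def by (metis order.antisym subset_refl)
next
  case (succ y)
  show ?case
  proof (cases "x = y")
    case False
    then have "x \<le> pred_ord y"
      using succ.hyps succ.prems by (auto intro: le_pred_ord)
    then have "ord_iter F x \<subseteq> ord_iter F (pred_ord y)"
      by (rule succ.IH)
    also have "\<dots> \<subseteq> ord_iter F y"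
      using ord_iter_inflationary[OF assms(1)] succ.hyps by (simp add: ord_iter_succ)
    finally show ?thesis .
  qed simp
next
  case (limit y)
  show ?case
  proof (cases "x = y")
    case False
    then have "x < y"
      using limit.prems by simp
    then show ?thesis
      by (subst ord_iter_limit[OF limit.hyps]) blast
  qed simp
qed

lemma rtrancl_within_scc:
  fixes P :: "('a \<times> 'a) set" and a :: 'a
  defines "C \<equiv> {c. (a, c) \<in> P\<^sup>* \<and> (c, a) \<in> P\<^sup>*}"
  assumes "(x, y) \<in> P\<^sup>*" and "(a, x) \<in> P\<^sup>*" and "(y, a) \<in> P\<^sup>*"
  shows "(x, y) \<in> (P \<inter> C \<times> C)\<^sup>*"
  using assms(2,4)
proof (induction rule: rtrancl_induct)
  case (step y z)
  have "(y, a) \<in> P\<^sup>*"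
    using step.hyps(2) step.prems by (rule converse_rtrancl_into_rtrancl)
  moreover have "(a, y) \<in> P\<^sup>*" "(a, z) \<in> P\<^sup>*"
    using assms(3) step.hyps by auto
  ultimately show ?case
    using step unfolding C_def by (auto intro: rtrancl_into_rtrancl)
qed simp

lemma reach_mono:
  assumes "Y \<subseteq> B" and "reach A R Y a b"
  shows "reach A R B a b"
proof -
  have "(R \<inter> Y \<times> Y)\<^sup>* \<subseteq> (R \<inter> B \<times> B)\<^sup>*"
    using assms(1) by (intro rtrancl_mono) blast
  then show ?thesis
    using assms unfolding reach_def by blast
qed

lemma reach_trans: "reach A R B a b \<Longrightarrow> reach A R B b c \<Longrightarrow> reach A R B a c"
  unfolding reach_def by auto

lemma reach_target:
  assumes "R \<subseteq> A \<times> A" and "reach A R B a b"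
  shows "b \<in> A \<inter> B"
proof -
  have "(a, b) \<in> (R \<inter> B \<times> B)\<^sup>*" and "a \<in> A \<inter> B"
    using assms(2) unfolding reach_def by auto
  then show ?thesis
    using assms(1) by (cases rule: rtranclE) auto
qed

lemma scc_in_subset: "scc_in A R B a \<subseteq> A \<inter> B"
  unfolding scc_in_def reach_def by auto

lemma scc_in_mono: "Y \<subseteq> B \<Longrightarrow> scc_in A R Y a \<subseteq> scc_in A R B a"
  unfolding scc_in_def using reach_mono[of Y B A R] by blast

lemma scc_in_restrict:
  assumes "R \<subseteq> A \<times> A" and "scc_in A R B a \<subseteq> Y" and "Y \<subseteq> B"
  shows "scc_in A R Y a = scc_in A R B a"
proof
  show "scc_in A R Y a \<subseteq> scc_in A R B a"
    using assms(3) by (rule scc_in_mono)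
next
  let ?P = "R \<inter> B \<times> B"
  let ?C = "{c. (a, c) \<in> ?P\<^sup>* \<and> (c, a) \<in> ?P\<^sup>*}"
  show "scc_in A R B a \<subseteq> scc_in A R Y a"
  proof
    fix b
    assume b: "b \<in> scc_in A R B a"
    then have a: "a \<in> A \<inter> B" and ab: "(a, b) \<in> ?P\<^sup>*" "(b, a) \<in> ?P\<^sup>*"
      unfolding scc_in_def reach_def by auto
    have "?C \<subseteq> scc_in A R B a"
    proof
      fix c
      assume c: "c \<in> ?C"
      then have "reach A R B a c"
        using a unfolding reach_def by simp
      then have "c \<in> A \<inter> B"
        by (rule reach_target[OF assms(1)])
      then show "c \<in> scc_in A R B a"
        using a c unfolding scc_in_def reach_def by simp
    qed
    then have "(?P \<inter> ?C \<times> ?C)\<^sup>* \<subseteq> (R \<inter> Y \<times> Y)\<^sup>*"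
      using assms(2) by (intro rtrancl_mono) blast
    moreover have "(a, b) \<in> (?P \<inter> ?C \<times> ?C)\<^sup>*" "(b, a) \<in> (?P \<inter> ?C \<times> ?C)\<^sup>*"
      using ab by (auto intro: rtrancl_within_scc)
    moreover have "a \<in> scc_in A R B a"
      using a unfolding scc_in_def reach_def by simp
    ultimately show "b \<in> scc_in A R Y a"
      using a b assms(2) scc_in_subset[of A R B a] unfolding scc_in_def reach_def by auto
  qed
qed

lemma mono_DeltaOp: "mono (DeltaOp A R S)"
proof (rule monoI)
  fix D D' :: "'a set"
  assume "D \<subseteq> D'"
  then have "A - D' \<subseteq> A - D"
    by blast
  then show "DeltaOp A R S D \<subseteq> DeltaOp A R S D'"
    unfolding DeltaOp_def using reach_mono[of "A - D'" "A - D" A R] by blast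
qed

lemma Delta_lfp_subset: "Delta_lfp A R S \<subseteq> A"
proof -
  have "Delta_lfp A R S = DeltaOp A R S (Delta_lfp A R S)"
    unfolding Delta_lfp_def by (rule lfp_fixpoint[OF mono_DeltaOp, symmetric])
  also have "\<dots> \<subseteq> A"
    unfolding DeltaOp_def by blast
  finally show ?thesis .
qed

lemma Delta_iter_eq_ord_iter: "Delta_iter A R S = ord_iter (DeltaOp A R S)"
  unfolding Delta_iter_def ord_iter_def ..

lemma C_S_zero: "is_zero_ord x \<Longrightarrow> C_S A R S a x = scc_in A R A a"
  unfolding C_S_def by (rule ord_rec_zero)

lemma C_S_succ:
  "is_succ_ord x \<Longrightarrow> C_S A R S a x =
     scc_in A R (C_S A R S a (pred_ord x) - D_S R S (C_S A R S a (pred_ord x))) a"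
  unfolding C_S_def by (rule ord_rec_succ)

lemma C_S_limit:
  "\<not> is_zero_ord x \<Longrightarrow> \<not> is_succ_ord x \<Longrightarrow>
     C_S A R S a x = scc_in A R (\<Inter>{C_S A R S a y | y. y < x}) a"
  unfolding C_S_def by (rule ord_rec_limit)

lemma scc_minus_D_S_eq_minus_DeltaOp:
  assumes "R \<subseteq> A \<times> A" and X: "X = scc_in A R (A - D) a"
  shows "X - D_S R S X = X - DeltaOp A R S D"
proof -
  have "c \<in> D_S R S X \<longleftrightarrow> c \<in> DeltaOp A R S D" if c: "c \<in> X" for c
  proof -
    have ca: "reach A R (A - D) c a" and ac: "reach A R (A - D) a c" and cA: "c \<in> A - D"
      using c scc_in_subset[of A R "A - D" a] unfolding X by (auto simp: scc_in_def)
    have "b \<in> X \<longleftrightarrow> reach A R (A - D) c b" if "(b, c) \<in> R" for b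
    proof
      assume "b \<in> X"
      then show "reach A R (A - D) c b"
        using ca unfolding X scc_in_def by (blast intro: reach_trans)
    next
      assume cb: "reach A R (A - D) c b"
      then have "reach A R (A - D) b c"
        using reach_target[OF assms(1) cb] cA that unfolding reach_def by blast
      then show "b \<in> X"
        using ac ca cb unfolding X scc_in_def by (blast intro: reach_trans)
    qed
    then show ?thesis
      using c cA unfolding D_S_def DeltaOp_def by blast
  qed
  then show ?thesis
    by blast
qed

lemma Delta_iter_subset_Delta_lfp: "Delta_iter A R S x \<subseteq> Delta_lfp A R S"
  unfolding Delta_lfp_def Delta_iter_eq_ord_iter by (rule ord_iter_subset_lfp) (rule mono_DeltaOp)

lemma Delta_iter_mono: "x \<le> y \<Longrightarrow> Delta_iter A R S x \<subseteq> Delta_iter A R S y"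
  unfolding Delta_iter_eq_ord_iter by (rule ord_iter_mono[OF mono_DeltaOp])

lemma C_S_eq_scc_in_minus_Delta_iter:
  fixes x :: "'o::wellorder"
  assumes RA: "R \<subseteq> A \<times> A" and "a \<notin> Delta_iter A R S x"
  shows "C_S A R S a x = scc_in A R (A - Delta_iter A R S x) a"
  using assms(2)
proof (induction x rule: ord_induct)
  case (zero x)
  then show ?case
    by (simp add: C_S_zero Delta_iter_eq_ord_iter ord_iter_zero)
next
  case (succ x)
  let ?\<Delta> = "Delta_iter A R S"
  let ?X = "C_S A R S a (pred_ord x)"
  have \<Delta>_pred: "?\<Delta> (pred_ord x) \<subseteq> ?\<Delta> x"
    using succ.hyps by (simp add: Delta_iter_mono pred_ord_less less_imp_le)
  then have X: "?X = scc_in A R (A - ?\<Delta> (pred_ord x)) a"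
    using succ.IH succ.prems by blast
  have "C_S A R S a x = scc_in A R (?X - D_S R S ?X) a"
    using succ.hyps by (rule C_S_succ)
  also have "\<dots> = scc_in A R (?X - ?\<Delta> x) a"
    using succ.hyps scc_minus_D_S_eq_minus_DeltaOp[OF RA X]
    by (simp add: Delta_iter_eq_ord_iter ord_iter_succ)
  also have "\<dots> = scc_in A R (A - ?\<Delta> x) a"
  proof (rule scc_in_restrict[OF RA])
    have "scc_in A R (A - ?\<Delta> x) a \<subseteq> ?X"
      unfolding X by (rule scc_in_mono) (use \<Delta>_pred in blast)
    then show "scc_in A R (A - ?\<Delta> x) a \<subseteq> ?X - ?\<Delta> x"
      using scc_in_subset[of A R "A - ?\<Delta> x" a] by blast
    show "?X - ?\<Delta> x \<subseteq> A - ?\<Delta> x"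
      unfolding X using scc_in_subset[of A R "A - ?\<Delta> (pred_ord x)" a] by blast
  qed
  finally show ?case .
next
  case (limit x)
  let ?\<Delta> = "Delta_iter A R S"
  have \<Delta>_less: "?\<Delta> y \<subseteq> ?\<Delta> x" if "y < x" for y
    using that by (simp add: Delta_iter_mono)
  have C_less: "C_S A R S a y = scc_in A R (A - ?\<Delta> y) a" if "y < x" for y
    using limit.IH[OF that] limit.prems \<Delta>_less[OF that] by blast
  have "C_S A R S a x = scc_in A R (\<Inter>{C_S A R S a y | y. y < x}) a"
    using limit.hyps by (rule C_S_limit)
  also have "\<dots> = scc_in A R (A - ?\<Delta> x) a"
  proof (rule scc_in_restrict[OF RA])
    have "scc_in A R (A - ?\<Delta> x) a \<subseteq> C_S A R S a y" if "y < x" for y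
      unfolding C_less[OF that] by (rule scc_in_mono) (use \<Delta>_less[OF that] in blast)
    then show "scc_in A R (A - ?\<Delta> x) a \<subseteq> \<Inter>{C_S A R S a y | y. y < x}"
      by blast
    show "\<Inter>{C_S A R S a y | y. y < x} \<subseteq> A - ?\<Delta> x"
    proof
      fix c
      assume "c \<in> \<Inter>{C_S A R S a y | y. y < x}"
      then have c: "c \<in> A - ?\<Delta> y" if "y < x" for y
        using that C_less[OF that] scc_in_subset[of A R "A - ?\<Delta> y" a] by blast
      obtain y0 where "y0 < x"
        using limit.hyps unfolding is_zero_ord_def by (meson not_le)
      moreover have "?\<Delta> x = \<Union>{?\<Delta> y | y. y < x}"
        using limit.hyps by (simp add: Delta_iter_eq_ord_iter ord_iter_limit)
      ultimately show "c \<in> A - ?\<Delta> x"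
        using c by blast
    qed
  qed
  finally show ?case .
qed

lemma stable_scc_disjoint_Delta_lfp:
  assumes stable: "scc_in A R (X - D_S R S X) a = X"
  shows "X \<inter> Delta_lfp A R S = {}"
proof -
  have "X \<subseteq> X - D_S R S X"
    using scc_in_subset[of A R "X - D_S R S X" a] unfolding stable by blast
  then have "D_S R S X = {}"
    unfolding D_S_def by blast
  then have X: "scc_in A R X a = X"
    using stable by simp
  have "DeltaOp A R S (- X) \<subseteq> - X"
  proof
    fix c
    assume "c \<in> DeltaOp A R S (- X)"
    then obtain b where b: "b \<in> S" "(b, c) \<in> R" "\<not> reach A R (A - - X) c b"
      unfolding DeltaOp_def by blast
    show "c \<in> - X"
    proof
      assume c: "c \<in> X"
      with \<open>D_S R S X = {}\<close> b have "b \<in> X"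
        unfolding D_S_def by blast
      then have "reach A R X c b"
        using c X unfolding scc_in_def by (blast intro: reach_trans)
      then show False
        using b(3) X scc_in_subset[of A R X a] reach_mono[of X "A - - X"] by blast
    qed
  qed
  then have "Delta_lfp A R S \<subseteq> - X"
    unfolding Delta_lfp_def by (rule lfp_lowerbound)
  then show ?thesis
    by blast
qed

theorem lemma3:
  fixes A :: "'a set" and R :: "('a \<times> 'a) set" and S :: "'a set" and \<beta> :: "'o::wellorder"
  assumes "R \<subseteq> A \<times> A"
    and "S \<subseteq> A"
    and "\<forall>a \<in> A. (\<exists>g::'o. alpha_stop A R S a g) \<and> (alpha_S A R S a :: 'o) < \<beta>"
  shows "Delta_lfp A R S = Delta_iter A R S \<beta>"
proof
  show "Delta_iter A R S \<beta> \<subseteq> Delta_lfp A R S"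
    by (rule Delta_iter_subset_Delta_lfp)
  show "Delta_lfp A R S \<subseteq> Delta_iter A R S \<beta>"
  proof (rule subsetI, rule ccontr)
    fix a
    assume a_lfp: "a \<in> Delta_lfp A R S" and a_notin: "a \<notin> Delta_iter A R S \<beta>"
    have "a \<in> A"
      using a_lfp Delta_lfp_subset[of A R S] by blast
    define g where "g = (alpha_S A R S a :: 'o)"
    have stop: "alpha_stop A R S a g"
      using assms(3) \<open>a \<in> A\<close> unfolding g_def alpha_S_def by (blast intro: LeastI_ex)
    have "g < \<beta>"
      using assms(3) \<open>a \<in> A\<close> unfolding g_def by blast
    then have "a \<notin> Delta_iter A R S g"
      using a_notin Delta_iter_mono[of g \<beta> A R S] by (auto dest: less_imp_le)
    then have X: "C_S A R S a g = scc_in A R (A - Delta_iter A R S g) a"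
      by (rule C_S_eq_scc_in_minus_Delta_iter[OF assms(1)])
    let ?X = "C_S A R S a g"
    have "a \<in> ?X"
      unfolding X using \<open>a \<in> A\<close> \<open>a \<notin> Delta_iter A R S g\<close> by (simp add: scc_in_def reach_def)
    then have "scc_in A R (?X - D_S R S ?X) a = ?X"
      using stop unfolding alpha_stop_def Let_def by blast
    then have "?X \<inter> Delta_lfp A R S = {}"
      by (rule stable_scc_disjoint_Delta_lfp)
    then show False
      using \<open>a \<in> ?X\<close> a_lfp by blast
  qed
qed

end
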